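(* Let $n \ge 19$. Let $H$ be a red-blue colouring of $K_n$ satisfying $\mathrm{pack}(H) \le n(n-1)/4$. Suppose that $\{X_1, X_2\}$ is a bipartition of $V(H)$ such that the number $k$ of blue edges with both ends in $X_1$ or both ends in $X_2$ satisfies $k \le n/8$. Then (a) $|X_i| \ge k + 4$ for $i \in [2]$, and (b) $|X_i| \ge 7$ for $i \in [2]$.
   Context: A red-blue colouring $H$ of $K_n$ assigns red or blue to each edge of the complete graph on the $n$-vertex set $V(H)$; $H_R, H_B$ are the spanning subgraphs of red and blue edges. For a graph $F$, a fractional triangle packing is a function $\omega$ from the triangles of $F$ to $[0,1]$ with $\sum_{T \ni e}\omega(T) \le 1$ for every edge $e$; $\nu^*(F)$ is the maximum of $\sum_T\omega(T)$; $\mathrm{pack}(H) = 3(\nu^*(H_R)+\nu^*(H_B))$. *)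

theory Defs
  imports Complex_Main
begin

text \<open>A red-blue colouring of K_n on V is given by its set B of blue edges
(B a subset of edges V); the red edges are edges V - B.\<close>

definition cedges :: "'a set \<Rightarrow> 'a set set" where
  "cedges V = {e. e \<subseteq> V \<and> card e = 2}"

definition triangles :: "'a set set \<Rightarrow> 'a set set" where
  "triangles E = {T. finite T \<and> card T = 3 \<and> (\<forall>e. e \<subseteq> T \<and> card e = 2 \<longrightarrow> e \<in> E)}"

definition frac_tri_packing :: "'a set set \<Rightarrow> ('a set \<Rightarrow> real) \<Rightarrow> bool" where
  "frac_tri_packing E w \<longleftrightarrow>
     (\<forall>T\<in>triangles E. 0 \<le> w T \<and> w T \<le> 1) \<and>
     (\<forall>e\<in>E. (\<Sum>T\<in>{T\<in>triangles E. e \<subseteq> T}. w T) \<le> 1)"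

text \<open>Fractional triangle packing number: maximum (supremum; it is attained)
of the total weight.\<close>
definition nu_star :: "'a set set \<Rightarrow> real" where
  "nu_star E = Sup {(\<Sum>T\<in>triangles E. w T) | w. frac_tri_packing E w}"

definition pack :: "'a set \<Rightarrow> 'a set set \<Rightarrow> real" where
  "pack V B = 3 * (nu_star (cedges V - B) + nu_star B)"

end

theory Submission
  imports Defs
begin

text \<open>Inside each part \<open>X\<close> of the bipartition, give every red triangle weight \<open>1/(|X| - 2)\<close>.
An edge inside \<open>X\<close> lies in only \<open>|X| - 2\<close> triangles of \<open>X\<close>, so this is a fractional triangle
packing of the red graph, and since a blue edge inside \<open>X\<close> destroys at most \<open>|X| - 2\<close> of the
\<open>C(|X|, 3)\<close> triangles of \<open>X\<close>, its weight is at least \<open>|X|(|X| - 1)/6\<close> minus the number of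
blue edges inside \<open>X\<close>. With parts of sizes \<open>s + m = n\<close> this gives
\<open>pack(H) \<ge> s(s-1)/2 + m(m-1)/2 - 3k = n(n-1)/2 - sm - 3k\<close>, so \<open>sm + 3k \<ge> n(n-1)/4\<close>,
which fails for \<open>n \<ge> 19\<close> as soon as one part has fewer than 7 or fewer than \<open>k + 4\<close> vertices.\<close>

lemma triangles_subset_Pow:
  assumes "E \<subseteq> cedges V"
  shows "triangles E \<subseteq> Pow V"
proof
  fix T assume T: "T \<in> triangles E"
  show "T \<in> Pow V"
  proof (rule PowI, rule subsetI)
    fix x assume x: "x \<in> T"
    have "card (T - {x}) = 2" using T x by (simp add: triangles_def)
    then obtain y where y: "y \<in> T" "y \<noteq> x"
      by (metis Diff_iff card_0_eq ex_in_conv finite.emptyI insert_iff zero_neq_numeral)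
    have "{x, y} \<in> E" using T x y by (auto simp: triangles_def)
    then show "x \<in> V" using assms by (auto simp: cedges_def)
  qed
qed

lemma finite_triangles:
  assumes "finite V" "E \<subseteq> cedges V"
  shows "finite (triangles E)"
  using triangles_subset_Pow[OF assms(2)] assms(1) by (meson finite_Pow_iff finite_subset)

lemma finite_cedges: "finite V \<Longrightarrow> finite (cedges V)"
  by (simp add: cedges_def)

lemma card_ge_3_if_triangle_subset:
  assumes "T \<in> triangles E" "T \<subseteq> X" "finite X"
  shows "3 \<le> card X"
  using card_mono[OF assms(3,2)] assms(1) by (simp add: triangles_def)

lemma sum_le_nu_star:
  assumes "finite V" "E \<subseteq> cedges V" "frac_tri_packing E w"
  shows "(\<Sum>T\<in>triangles E. w T) \<le> nu_star E"
  unfolding nu_star_def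
proof (rule cSup_upper)
  show "(\<Sum>T\<in>triangles E. w T) \<in> {(\<Sum>T\<in>triangles E. w T) | w. frac_tri_packing E w}"
    using assms(3) by blast
  show "bdd_above {(\<Sum>T\<in>triangles E. w T) | w. frac_tri_packing E w}"
  proof (rule bdd_aboveI)
    fix x assume "x \<in> {(\<Sum>T\<in>triangles E. w T) | w. frac_tri_packing E w}"
    then obtain u where x: "x = (\<Sum>T\<in>triangles E. u T)" and u: "frac_tri_packing E u" by blast
    have "x \<le> (\<Sum>T\<in>triangles E. 1)" unfolding x
      by (rule sum_mono) (use u in \<open>auto simp: frac_tri_packing_def\<close>)
    then show "x \<le> real (card (triangles E))" by simp
  qed
qed

lemma nu_star_nonneg:
  assumes "finite V" "E \<subseteq> cedges V"
  shows "0 \<le> nu_star E"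
  using sum_le_nu_star[OF assms, of "\<lambda>_. 0"] by (simp add: frac_tri_packing_def)

lemma of_nat_choose_3: "real (t choose 3) = real t * (real t - 1) * (real t - 2) / 6"
  by (simp add: binomial_gbinomial gbinomial_pochhammer' pochhammer_Suc_prod numeral_3_eq_3
      prod.atLeast0_lessThan_Suc algebra_simps)

lemma card_3_subsets_containing:
  assumes "finite X" "e \<subseteq> X" "card e = 2"
  shows "card {T. T \<subseteq> X \<and> card T = 3 \<and> e \<subseteq> T} = card X - 2"
proof -
  have fe: "finite e" using assms finite_subset by blast
  have "bij_betw (\<lambda>x. insert x e) (X - e) {T. T \<subseteq> X \<and> card T = 3 \<and> e \<subseteq> T}"
  proof (rule bij_betwI')
    fix x y assume "x \<in> X - e" "y \<in> X - e"
    then show "(insert x e = insert y e) = (x = y)" by (metis Diff_iff insertE insertI1)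
  next
    fix x assume "x \<in> X - e"
    then show "insert x e \<in> {T. T \<subseteq> X \<and> card T = 3 \<and> e \<subseteq> T}"
      using assms fe by auto
  next
    fix T assume T: "T \<in> {T. T \<subseteq> X \<and> card T = 3 \<and> e \<subseteq> T}"
    then have "finite T" using assms(1) finite_subset by blast
    then have "card (T - e) = 1"
      using T assms(3) fe card_Diff_subset[of e T] by simp
    then obtain x where x: "T - e = {x}" by (meson card_1_singletonE)
    then show "\<exists>x\<in>X - e. T = insert x e" using T by auto
  qed
  then have "card {T. T \<subseteq> X \<and> card T = 3 \<and> e \<subseteq> T} = card (X - e)"
    by (simp add: bij_betw_same_card)
  also have "\<dots> = card X - 2" using assms fe by (simp add: card_Diff_subset)
  finally show ?thesis .
qed

text \<open>Every 3-subset of \<open>X\<close> that is not a red triangle contains a blue edge inside \<open>X\<close>.\<close>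

lemma card_3_subsets_le_red_triangles:
  assumes fV: "finite V" and BV: "B \<subseteq> cedges V" and XV: "X \<subseteq> V"
  shows "card X choose 3
           \<le> card {T\<in>triangles (cedges V - B). T \<subseteq> X} + card {e\<in>B. e \<subseteq> X} * (card X - 2)"
proof -
  let ?S = "{T\<in>triangles (cedges V - B). T \<subseteq> X}"
  let ?BX = "{e\<in>B. e \<subseteq> X}"
  let ?C = "\<lambda>e. {T. T \<subseteq> X \<and> card T = 3 \<and> e \<subseteq> T}"
  have fX: "finite X" using fV XV finite_subset by blast
  have fBX: "finite ?BX"
    using finite_subset[OF BV finite_cedges[OF fV]] by simp
  have cover: "{T. T \<subseteq> X \<and> card T = 3} \<subseteq> ?S \<union> (\<Union>e\<in>?BX. ?C e)"
  proof
    fix T assume T: "T \<in> {T. T \<subseteq> X \<and> card T = 3}"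
    show "T \<in> ?S \<union> (\<Union>e\<in>?BX. ?C e)"
    proof (cases "T \<in> triangles (cedges V - B)")
      case False
      have "finite T" using T fX finite_subset by blast
      then have "\<not> (\<forall>e. e \<subseteq> T \<and> card e = 2 \<longrightarrow> e \<in> cedges V - B)"
        using T False unfolding triangles_def by blast
      then obtain e where e: "e \<subseteq> T" "card e = 2" "e \<notin> cedges V - B" by blast
      then have "e \<in> ?BX" using T XV by (auto simp: cedges_def)
      then show ?thesis using e T by blast
    qed (use T in blast)
  qed
  have "?S \<union> (\<Union>e\<in>?BX. ?C e) \<subseteq> {T. T \<subseteq> X}" by auto
  then have fin_cover: "finite (?S \<union> (\<Union>e\<in>?BX. ?C e))"
    by (rule finite_subset[OF _ finite_Collect_subsets[OF fX]])
  have "card X choose 3 = card {T. T \<subseteq> X \<and> card T = 3}"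
    using n_subsets[OF fX, of 3] by simp
  also have "\<dots> \<le> card (?S \<union> (\<Union>e\<in>?BX. ?C e))"
    by (rule card_mono[OF fin_cover cover])
  also have "\<dots> \<le> card ?S + (\<Sum>e\<in>?BX. card (?C e))"
    using card_Un_le[of ?S "\<Union>e\<in>?BX. ?C e"] card_UN_le[OF fBX, of ?C] by linarith
  also have "(\<Sum>e\<in>?BX. card (?C e)) = (\<Sum>e\<in>?BX. card X - 2)"
    by (rule sum.cong) (use BV card_3_subsets_containing[OF fX] in \<open>auto simp: cedges_def\<close>)
  finally show ?thesis by simp
qed

definition clique_weight :: "'a set \<Rightarrow> 'a set \<Rightarrow> real" where
  "clique_weight X T = (if T \<subseteq> X then 1 / (real (card X) - 2) else 0)"

lemma sum_clique_weight:
  assumes "finite A"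
  shows "(\<Sum>T\<in>A. clique_weight X T) = real (card {T\<in>A. T \<subseteq> X}) / (real (card X) - 2)"
  using assms by (simp add: clique_weight_def sum.inter_filter[symmetric])

lemma clique_weight_triangle_bounds:
  assumes "finite X" "T \<in> triangles E"
  shows "0 \<le> clique_weight X T" "clique_weight X T \<le> 1"
  using card_ge_3_if_triangle_subset[OF assms(2) _ assms(1)] by (auto simp: clique_weight_def)

lemma clique_weight_load_le:
  assumes "finite (triangles E)" "finite X" "card e = 2"
  shows "(\<Sum>T\<in>{T\<in>triangles E. e \<subseteq> T}. clique_weight X T) \<le> (if e \<subseteq> X then 1 else 0)"
proof -
  let ?S = "{T\<in>{T\<in>triangles E. e \<subseteq> T}. T \<subseteq> X}"
  have sum_eq: "(\<Sum>T\<in>{T\<in>triangles E. e \<subseteq> T}. clique_weight X T)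
      = real (card ?S) / (real (card X) - 2)"
    using assms(1) by (simp add: sum_clique_weight)
  show ?thesis
  proof (cases "?S = {}")
    case False
    then obtain T where T: "T \<in> triangles E" "e \<subseteq> T" "T \<subseteq> X" by auto
    have X3: "3 \<le> card X" using card_ge_3_if_triangle_subset[OF T(1,3) assms(2)] .
    have "?S \<subseteq> {T. T \<subseteq> X \<and> card T = 3 \<and> e \<subseteq> T}" by (auto simp: triangles_def)
    moreover have "finite {T. T \<subseteq> X \<and> card T = 3 \<and> e \<subseteq> T}"
      using finite_Collect_subsets[OF assms(2)] by (rule rev_finite_subset) blast
    ultimately have "card ?S \<le> card {T. T \<subseteq> X \<and> card T = 3 \<and> e \<subseteq> T}"
      by (rule card_mono[rotated])
    also have "\<dots> = card X - 2"
      using card_3_subsets_containing[OF assms(2) _ assms(3)] T(2,3) by blast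
    finally have "real (card ?S) \<le> real (card X) - 2" using X3 by linarith
    then show ?thesis using sum_eq X3 T by simp
  next
    case True
    show ?thesis unfolding sum_eq True by simp
  qed
qed

lemma frac_tri_packing_clique_weights:
  assumes "finite V" "E \<subseteq> cedges V" "finite X1" "finite X2" "X1 \<inter> X2 = {}"
  shows "frac_tri_packing E (\<lambda>T. clique_weight X1 T + clique_weight X2 T)"
  unfolding frac_tri_packing_def
proof (intro conjI ballI)
  fix T assume T: "T \<in> triangles E"
  then have "T \<noteq> {}" by (auto simp: triangles_def)
  then have "clique_weight X1 T = 0 \<or> clique_weight X2 T = 0"
    using assms(5) by (auto simp: clique_weight_def)
  then show "0 \<le> clique_weight X1 T + clique_weight X2 T"
    and "clique_weight X1 T + clique_weight X2 T \<le> 1"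
    using clique_weight_triangle_bounds[OF assms(3) T] clique_weight_triangle_bounds[OF assms(4) T]
    by auto
next
  fix e assume "e \<in> E"
  then have e: "card e = 2" using assms(2) by (auto simp: cedges_def)
  then have "e \<noteq> {}" by auto
  then have "\<not> (e \<subseteq> X1 \<and> e \<subseteq> X2)" using assms(5) by blast
  then show "(\<Sum>T\<in>{T\<in>triangles E. e \<subseteq> T}. clique_weight X1 T + clique_weight X2 T) \<le> 1"
    using clique_weight_load_le[OF finite_triangles[OF assms(1,2)] assms(3) e]
      clique_weight_load_le[OF finite_triangles[OF assms(1,2)] assms(4) e]
    by (simp add: sum.distrib split: if_splits)
qed

text \<open>The total weight \<open>C(t, 3)/(t - 2)\<close> that \<open>clique_weight\<close> puts on \<open>K\<^sub>t\<close>.\<close>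

definition clique_packing_value :: "nat \<Rightarrow> real" where
  "clique_packing_value t = (if 3 \<le> t then real t * (real t - 1) / 6 else 0)"

lemma sum_clique_weight_red_ge:
  assumes "finite V" "B \<subseteq> cedges V" "X \<subseteq> V"
  shows "clique_packing_value (card X) - real (card {e\<in>B. e \<subseteq> X})
           \<le> (\<Sum>T\<in>triangles (cedges V - B). clique_weight X T)"
proof -
  let ?t = "card X"
  let ?s = "card {T\<in>triangles (cedges V - B). T \<subseteq> X}"
  let ?b = "card {e\<in>B. e \<subseteq> X}"
  have sum_eq: "(\<Sum>T\<in>triangles (cedges V - B). clique_weight X T) = real ?s / (real ?t - 2)"
    using finite_triangles[OF assms(1), of "cedges V - B"] by (simp add: sum_clique_weight)
  show ?thesis
  proof (cases "3 \<le> ?t")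
    case True
    have "real (?t choose 3) \<le> real (?s + ?b * (?t - 2))"
      using card_3_subsets_le_red_triangles[OF assms] by linarith
    then have "real (?t choose 3) \<le> real ?s + real ?b * (real ?t - 2)"
      using True by (simp add: of_nat_diff)
    then have "real ?t * (real ?t - 1) / 6 - real ?b \<le> real ?s / (real ?t - 2)"
      using True by (simp add: of_nat_choose_3 field_simps)
    then show ?thesis using sum_eq True by (simp add: clique_packing_value_def)
  next
    case False
    then have no_triangles: "{T\<in>triangles (cedges V - B). T \<subseteq> X} = {}"
      using card_ge_3_if_triangle_subset finite_subset[OF assms(3,1)] by blast
    have "(\<Sum>T\<in>triangles (cedges V - B). clique_weight X T) = 0"
      unfolding sum_eq no_triangles by simp
    then show ?thesis using False by (simp add: clique_packing_value_def)
  qed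
qed

lemma pack_ge_clique_packing_values:
  assumes fV: "finite V" and BV: "B \<subseteq> cedges V" and U: "X1 \<union> X2 = V" and D: "X1 \<inter> X2 = {}"
  shows "3 * (clique_packing_value (card X1) + clique_packing_value (card X2)
              - real (card {e\<in>B. e \<subseteq> X1 \<or> e \<subseteq> X2})) \<le> pack V B"
proof -
  let ?R = "cedges V - B"
  have X1V: "X1 \<subseteq> V" and X2V: "X2 \<subseteq> V" using U by auto
  have fX1: "finite X1" and fX2: "finite X2"
    using finite_subset[OF X1V fV] finite_subset[OF X2V fV] .
  have fB: "finite B" using finite_subset[OF BV finite_cedges[OF fV]] .
  have "\<forall>e\<in>B. e \<noteq> {}" using BV by (auto simp: cedges_def)
  then have "{e\<in>B. e \<subseteq> X1} \<inter> {e\<in>B. e \<subseteq> X2} = {}" using D by blast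
  moreover have "{e\<in>B. e \<subseteq> X1 \<or> e \<subseteq> X2} = {e\<in>B. e \<subseteq> X1} \<union> {e\<in>B. e \<subseteq> X2}" by blast
  ultimately have blue_split:
    "card {e\<in>B. e \<subseteq> X1 \<or> e \<subseteq> X2} = card {e\<in>B. e \<subseteq> X1} + card {e\<in>B. e \<subseteq> X2}"
    using fB by (simp add: card_Un_disjoint)
  have "clique_packing_value (card X1) + clique_packing_value (card X2)
          - real (card {e\<in>B. e \<subseteq> X1 \<or> e \<subseteq> X2})
        \<le> (\<Sum>T\<in>triangles ?R. clique_weight X1 T + clique_weight X2 T)"
    using sum_clique_weight_red_ge[OF fV BV X1V] sum_clique_weight_red_ge[OF fV BV X2V] blue_split
    by (simp add: sum.distrib)
  also have "\<dots> \<le> nu_star ?R"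
    by (rule sum_le_nu_star[OF fV _ frac_tri_packing_clique_weights[OF fV _ fX1 fX2 D]]) auto
  finally show ?thesis
    using nu_star_nonneg[OF fV BV] unfolding pack_def by argo
qed

lemma small_part_cross_pairs_lt:
  fixes n s k :: real
  assumes "19 \<le> n" "8 * k \<le> n" "s \<le> 6 \<or> s \<le> k + 3"
  shows "s * (n - s) + 3 * k < n * (n - 1) / 4"
proof (cases "s \<le> 6")
  case True
  have "0 \<le> (6 - s) * (n - s - 6)" using True assms(1) by simp
  moreover have "0 \<le> (n - 19) * (n - 7.5)" using assms(1) by simp
  ultimately show ?thesis using assms(2) by (simp add: algebra_simps) argo
next
  case False
  have "0 \<le> (n / 8 + 3 - s) * (7 * n / 8 - 3 - s)" using False assms by simp
  moreover have "0 \<le> (n - 19) * (9 * n - 13)" using assms(1) by simp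
  ultimately show ?thesis using assms(2) by (simp add: algebra_simps) argo
qed

lemma tiny_part_pairs_gt:
  fixes n s k :: real
  assumes "19 \<le> n" "8 * k \<le> n" "0 \<le> s" "s \<le> 2"
  shows "n * (n - 1) / 4 < (n - s) * (n - s - 1) / 2 - 3 * k"
proof -
  have "s * n \<le> 2 * n" using assms(1,4) by simp
  moreover have "0 \<le> (n - 19) * n" using assms(1) by simp
  moreover have "(n - s) * (n - s - 1) = n * n - 2 * (s * n) + s * s - n + s"
    by (simp add: algebra_simps)
  moreover have "(n - 19) * n = n * n - 19 * n" by (simp add: algebra_simps)
  moreover have "0 \<le> s * s" by simp
  moreover have "n * (n - 1) = n * n - n" by (simp add: algebra_simps)
  ultimately show ?thesis using assms(1-3) by linarith
qed

lemma bipartition_part_large: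
  fixes V :: "'a set" and B :: "'a set set" and X1 X2 :: "'a set" and n k :: nat
  assumes fV: "finite V" and cV: "card V = n" and n19: "n \<ge> 19"
    and BV: "B \<subseteq> cedges V"
    and pk: "pack V B \<le> real n * (real n - 1) / 4"
    and U: "X1 \<union> X2 = V" and D: "X1 \<inter> X2 = {}"
    and k: "k = card {e\<in>B. e \<subseteq> X1 \<or> e \<subseteq> X2}"
    and k8: "real k \<le> real n / 8"
  shows "k + 4 \<le> card X1 \<and> 7 \<le> card X1"
proof (rule ccontr)
  assume "\<not> ?thesis"
  then have small: "real (card X1) \<le> 6 \<or> real (card X1) \<le> real k + 3" by linarith
  have n_split: "card X2 = n - card X1" "card X1 \<le> n"
    using card_Un_disjoint[of X1 X2] fV U D cV by (auto simp: finite_Un)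
  have bound: "3 * (clique_packing_value (card X1) + clique_packing_value (card X2) - real k)
                 \<le> real n * (real n - 1) / 4"
    unfolding k by (rule order_trans[OF pack_ge_clique_packing_values[OF fV BV U D] pk])
  have "3 \<le> card X2" using n_split small k8 n19 by linarith
  show False
  proof (cases "3 \<le> card X1")
    case True
    have "3 * (clique_packing_value (card X1) + clique_packing_value (card X2) - real k)
            = real n * (real n - 1) / 2 - (real (card X1) * (real n - real (card X1)) + 3 * real k)"
      using True \<open>3 \<le> card X2\<close> n_split
      by (simp add: clique_packing_value_def of_nat_diff field_simps)
    then show False
      using bound small_part_cross_pairs_lt[of "real n" "real k" "real (card X1)"] n19 k8 small
      by linarith
  next
    case False
    then show False
      using bound tiny_part_pairs_gt[of "real n" "real k" "real (card X1)"] n19 k8 \<open>3 \<le> card X2\<close> n_split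
      by (simp add: clique_packing_value_def of_nat_diff)
  qed
qed

theorem proposition4p1:
  fixes V :: "'a set" and B :: "'a set set" and X1 X2 :: "'a set" and n k :: nat
  assumes "finite V" and "card V = n" and "n \<ge> 19"
    and "B \<subseteq> cedges V"
    and "pack V B \<le> real n * (real n - 1) / 4"
    and "X1 \<union> X2 = V" and "X1 \<inter> X2 = {}"
    and "k = card {e\<in>B. e \<subseteq> X1 \<or> e \<subseteq> X2}"
    and "real k \<le> real n / 8"
  shows "(card X1 \<ge> k + 4 \<and> card X2 \<ge> k + 4) \<and> (card X1 \<ge> 7 \<and> card X2 \<ge> 7)"
proof -
  have "X2 \<union> X1 = V" "X2 \<inter> X1 = {}" using assms(6,7) by blast+
  moreover have "k = card {e\<in>B. e \<subseteq> X2 \<or> e \<subseteq> X1}"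
    using assms(8) by (simp add: disj_commute)
  ultimately have "k + 4 \<le> card X2 \<and> 7 \<le> card X2"
    using bipartition_part_large[OF assms(1-5)] assms(9) by blast
  then show ?thesis using bipartition_part_large[OF assms] by linarith
qed

end
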